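(* Let $\lambda,\mu\in P^+$ (type $C_2$). Then $$|\mathcal S^{C}_{\lambda,\mu}|=|\mathcal S^{C}_{\lambda-\varpi_1,\mu-\varpi_1}|+|{}^{1}\mathcal S^{C}_{\lambda-\varpi_2,\mu-\varpi_2}|+|{}^{2}\mathcal S^{C}_{\lambda,\mu}|.$$ Moreover, if $\min\{m_2,n_2\}>0$ then $$|{}^{2}\mathcal S^{C}_{\lambda,\mu}|=|{}^{2}\mathcal S^{C}_{\lambda-\varpi_2,\mu-\varpi_2}|+\min\{2(m_1+m_2),2(n_1+n_2),m_1+n_1\}+1,$$ and if $\min\{m_2,n_2\}=0$ and $\min\{m_1,n_1\}>0$ then $$|{}^{2}\mathcal S^{C}_{\lambda,\mu}|=|{}^{2}\mathcal S^{C}_{\lambda-\varpi_1,\mu-\varpi_1}|+\min\{n_1,m_2\}+\min\{m_1,n_2\}+1.$$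
   Context: For integral weights $\lambda,\mu$ of type $C_2$ (fundamental weights $\varpi_1,\varpi_2$, $\alpha_1$ short) write $m_i=\lambda(h_i)$, $n_i=\mu(h_i)$ (arbitrary integers; sets are defined by the same inequalities for all integer values). $\mathcal S^{C}_{\lambda,\mu}=\{(a,b,c,d)\in\mathbb Z_+^4: a\le\min\{m_1,n_1\},\ d\le\min\{m_2,n_2\},\ a+b+c\le\min\{m_1+m_2,n_1+n_2\},\ a+b+d\le\min\{m_1+m_2,n_1+n_2\},\ 2a+b\le m_1+n_1,\ 2d+b\le m_2+n_2,\ 2a+b+2(c-d)\le m_1+n_1\}$. ${}^{1}\mathcal S^{C}_{\lambda,\mu}=\{(b,c,d)\in\mathbb Z_+^3: d\le\min\{m_2,n_2\},\ b+d\le\min\{m_1+m_2,n_1+n_2\},\ b+c\le\min\{m_1+m_2,n_1+n_2\},\ b\le m_1+n_1,\ 2d+b\le m_2+n_2,\ b+2c-2d\le m_1+n_1\}$. ${}^{2}\mathcal S^{C}_{\lambda,\mu}\subseteq\mathbb Z_+^3$ is the union of $\{(b,0,d): d\le\min\{m_2,n_2\},\ b+d\le\min\{m_1+m_2,n_1+n_2\},\ b\le m_1+n_1,\ 2d+b\le m_2+n_2\}$ and $\{(b,c,0): c\ge1,\ b+c\le\min\{m_1+m_2,n_1+n_2\},\ b\le m_2+n_2,\ b+2c\le m_1+n_1\}$. *)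

theory Defs
  imports Main
begin

text \<open>Weights of type C2 are encoded by their coordinates m_i = lambda(h_i)
  with respect to the fundamental weights (varpi_1 = (1,0), varpi_2 = (0,1)).\<close>

definition SC :: "int \<Rightarrow> int \<Rightarrow> int \<Rightarrow> int \<Rightarrow> (int \<times> int \<times> int \<times> int) set" where
  "SC m1 m2 n1 n2 = {(a,b,c,d). 0 \<le> a \<and> 0 \<le> b \<and> 0 \<le> c \<and> 0 \<le> d \<and>
     a \<le> min m1 n1 \<and> d \<le> min m2 n2 \<and>
     a + b + c \<le> min (m1 + m2) (n1 + n2) \<and> a + b + d \<le> min (m1 + m2) (n1 + n2) \<and>
     2*a + b \<le> m1 + n1 \<and> 2*d + b \<le> m2 + n2 \<and> 2*a + b + 2*(c - d) \<le> m1 + n1}"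

definition SC1 :: "int \<Rightarrow> int \<Rightarrow> int \<Rightarrow> int \<Rightarrow> (int \<times> int \<times> int) set" where
  "SC1 m1 m2 n1 n2 = {(b,c,d). 0 \<le> b \<and> 0 \<le> c \<and> 0 \<le> d \<and>
     d \<le> min m2 n2 \<and> b + d \<le> min (m1 + m2) (n1 + n2) \<and>
     b + c \<le> min (m1 + m2) (n1 + n2) \<and> b \<le> m1 + n1 \<and>
     2*d + b \<le> m2 + n2 \<and> b + 2*c - 2*d \<le> m1 + n1}"

definition SC2 :: "int \<Rightarrow> int \<Rightarrow> int \<Rightarrow> int \<Rightarrow> (int \<times> int \<times> int) set" where
  "SC2 m1 m2 n1 n2 =
     {(b,c,d). 0 \<le> b \<and> c = 0 \<and> 0 \<le> d \<and>
        d \<le> min m2 n2 \<and> b + d \<le> min (m1 + m2) (n1 + n2) \<and>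
        b \<le> m1 + n1 \<and> 2*d + b \<le> m2 + n2}
   \<union> {(b,c,d). 0 \<le> b \<and> 1 \<le> c \<and> d = 0 \<and>
        b + c \<le> min (m1 + m2) (n1 + n2) \<and> b \<le> m2 + n2 \<and> b + 2*c \<le> m1 + n1}"

end

theory Submission
  imports Defs
begin

text \<open>All three identities come from explicit bijections. A point \<open>(a, b, c, d)\<close> of \<open>SC\<close> with
  \<open>a \<ge> 1\<close> becomes, after lowering \<open>a\<close>, a point of \<open>SC\<close> for \<open>\<lambda> - \<varpi>\<^sub>1, \<mu> - \<varpi>\<^sub>1\<close>; one with \<open>a = 0\<close>
  and \<open>c, d \<ge> 1\<close> becomes, after lowering \<open>c\<close> and \<open>d\<close>, a point of \<open>SC1\<close> for \<open>\<lambda> - \<varpi>\<^sub>2, \<mu> - \<varpi>\<^sub>2\<close>;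
  the remaining points with \<open>a = 0\<close> form \<open>SC2\<close>. For the recursions of \<open>SC2\<close>, a point for the
  smaller weights is moved up by raising \<open>d\<close> (resp. \<open>c\<close>) by one, except that in the first
  recursion \<open>(b, c, 0)\<close> with \<open>c \<ge> 1\<close> goes to \<open>(b + 2, c - 1, 0)\<close>; the points missed form a
  segment of \<open>K + 1\<close> points, \<open>K\<close> being the additive constant.\<close>

lemma card_image_Un_disjoint:
  assumes "finite A" "finite B" "inj_on f A" "f ` A \<inter> B = {}"
  shows "card (f ` A \<union> B) = card A + card B"
  using assms by (simp add: card_Un_disjoint card_image)

lemma finite_SC: "finite (SC m1 m2 n1 n2)"
proof (rule finite_subset)
  let ?I = "{0..\<bar>m1\<bar> + \<bar>m2\<bar> + \<bar>n1\<bar> + \<bar>n2\<bar>}"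
  show "SC m1 m2 n1 n2 \<subseteq> ?I \<times> ?I \<times> ?I \<times> ?I"
    by (auto simp: SC_def)
qed simp

lemma finite_SC1: "finite (SC1 m1 m2 n1 n2)"
proof (rule finite_subset)
  let ?I = "{0..\<bar>m1\<bar> + \<bar>m2\<bar> + \<bar>n1\<bar> + \<bar>n2\<bar>}"
  show "SC1 m1 m2 n1 n2 \<subseteq> ?I \<times> ?I \<times> ?I"
    by (auto simp: SC1_def)
qed simp

lemma finite_SC2: "finite (SC2 m1 m2 n1 n2)"
proof (rule finite_subset)
  let ?I = "{0..\<bar>m1\<bar> + \<bar>m2\<bar> + \<bar>n1\<bar> + \<bar>n2\<bar>}"
  show "SC2 m1 m2 n1 n2 \<subseteq> ?I \<times> ?I \<times> ?I"
    by (auto simp: SC2_def)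
qed simp

lemma SC_decomposition:
  assumes "0 \<le> m1" "0 \<le> m2" "0 \<le> n1" "0 \<le> n2"
  shows "SC m1 m2 n1 n2 =
           (\<lambda>(a, b, c, d). (a + 1, b, c, d)) ` SC (m1 - 1) m2 (n1 - 1) n2 \<union>
           (\<lambda>(b, c, d). (0, b, c, d)) `
             ((\<lambda>(b, c, d). (b, c + 1, d + 1)) ` SC1 m1 (m2 - 1) n1 (n2 - 1) \<union> SC2 m1 m2 n1 n2)"
    (is "_ = ?raise ` _ \<union> ?zero ` (?lift ` _ \<union> _)")
proof (intro equalityI subsetI)
  fix x assume x: "x \<in> SC m1 m2 n1 n2"
  then obtain a b c d where [simp]: "x = (a, b, c, d)" and "0 \<le> a"
    by (auto simp: SC_def)
  consider "a \<ge> 1" | "a = 0" "c \<ge> 1" "d \<ge> 1" | "a = 0" "c = 0 \<or> d = 0"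
    using x by (force simp: SC_def)
  then show "x \<in> ?raise ` SC (m1 - 1) m2 (n1 - 1) n2 \<union>
                 ?zero ` (?lift ` SC1 m1 (m2 - 1) n1 (n2 - 1) \<union> SC2 m1 m2 n1 n2)"
  proof cases
    case 1
    then have "(a - 1, b, c, d) \<in> SC (m1 - 1) m2 (n1 - 1) n2"
      using x by (auto simp: SC_def)
    then show ?thesis by (force intro: image_eqI[where x = "(a - 1, b, c, d)"])
  next
    case 2
    then have "(b, c - 1, d - 1) \<in> SC1 m1 (m2 - 1) n1 (n2 - 1)"
      using x by (auto simp: SC_def SC1_def)
    then show ?thesis using 2
      by (force intro: image_eqI[where x = "(b, c, d)"] image_eqI[where x = "(b, c - 1, d - 1)"])
  next
    case 3
    then have "(b, c, d) \<in> SC2 m1 m2 n1 n2"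
      using x by (auto simp: SC_def SC2_def)
    then show ?thesis using 3 by force
  qed
next
  fix x assume "x \<in> ?raise ` SC (m1 - 1) m2 (n1 - 1) n2 \<union>
                   ?zero ` (?lift ` SC1 m1 (m2 - 1) n1 (n2 - 1) \<union> SC2 m1 m2 n1 n2)"
  then show "x \<in> SC m1 m2 n1 n2"
    using assms by (auto simp: SC_def SC1_def SC2_def)
qed

lemma card_SC_recursion:
  assumes "0 \<le> m1" "0 \<le> m2" "0 \<le> n1" "0 \<le> n2"
  shows "card (SC m1 m2 n1 n2) = card (SC (m1 - 1) m2 (n1 - 1) n2)
           + card (SC1 m1 (m2 - 1) n1 (n2 - 1)) + card (SC2 m1 m2 n1 n2)"
proof -
  have inj: "inj_on (\<lambda>(a, b, c, d). (a + 1 :: int, b, c, d)) X"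
            "inj_on (\<lambda>(b, c, d). (0 :: int, b, c, d)) Y"
            "inj_on (\<lambda>(b, c, d). (b, c + 1 :: int, d + 1 :: int)) Z" for X Y Z
    by (auto simp: inj_on_def)
  have disjoint:
      "(\<lambda>(a, b, c, d). (a + 1, b, c, d)) ` SC (m1 - 1) m2 (n1 - 1) n2 \<inter>
         (\<lambda>(b, c, d). (0, b, c, d)) ` Y = {}"
      "(\<lambda>(b, c, d). (b, c + 1, d + 1)) ` SC1 m1 (m2 - 1) n1 (n2 - 1) \<inter> SC2 m1 m2 n1 n2 = {}"
    for Y by (auto simp: SC_def SC1_def SC2_def)
  show ?thesis
    unfolding SC_decomposition[OF assms]
    by (simp only: card_image_Un_disjoint card_image inj disjoint add.assoc
                  finite_SC finite_SC1 finite_SC2 finite_imageI finite_UnI)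
qed

text \<open>The points of \<open>SC2\<close> with \<open>d = 0\<close> and \<open>b \<le> 1\<close> are exactly the \<open>(k mod 2, k div 2, 0)\<close>
  with \<open>0 \<le> k = b + 2 c \<le> K\<close>; every other point is hit by the shift below.\<close>

lemma SC2_decomposition_varpi2:
  assumes "0 \<le> m1" "0 < m2" "0 \<le> n1" "0 < n2"
  shows "SC2 m1 m2 n1 n2 =
           (\<lambda>(b, c, d). if c = 0 then (b, 0, d + 1) else (b + 2, c - 1, 0)) `
             SC2 m1 (m2 - 1) n1 (n2 - 1) \<union>
           (\<lambda>k. (k mod 2, k div 2, 0)) ` {0..min (min (2*(m1 + m2)) (2*(n1 + n2))) (m1 + n1)}"
    (is "_ = ?shift ` _ \<union> ?digits ` {0..?K}")
proof (intro equalityI subsetI)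
  fix x assume x: "x \<in> SC2 m1 m2 n1 n2"
  then obtain b c d where [simp]: "x = (b, c, d)" by (cases x)
  consider "d \<ge> 1" "c = 0" | "d = 0" "b \<ge> 2" | "d = 0" "b = 0 \<or> b = 1"
    using x by (force simp: SC2_def)
  then show "x \<in> ?shift ` SC2 m1 (m2 - 1) n1 (n2 - 1) \<union> ?digits ` {0..?K}"
  proof cases
    case 1
    then have "(b, 0, d - 1) \<in> SC2 m1 (m2 - 1) n1 (n2 - 1)"
      using x by (auto simp: SC2_def)
    then show ?thesis using 1 by (force intro: image_eqI[where x = "(b, 0, d - 1)"])
  next
    case 2
    then have "(b - 2, c + 1, 0) \<in> SC2 m1 (m2 - 1) n1 (n2 - 1)" "c \<ge> 0"
      using x by (auto simp: SC2_def)
    then show ?thesis using 2 by (force intro: image_eqI[where x = "(b - 2, c + 1, 0)"])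
  next
    case 3
    then have "b + 2 * c \<in> {0..?K}"
      using x by (auto simp: SC2_def)
    then show ?thesis using 3 by (force intro: image_eqI[where x = "b + 2 * c"])
  qed
next
  have "?digits k \<in> SC2 m1 m2 n1 n2" if "k \<in> {0..?K}" for k
  proof -
    define q r where "q = k div 2" and "r = k mod 2"
    have "k = 2 * q + r" "r = 0 \<or> r = 1" "0 \<le> q"
      using that by (auto simp: q_def r_def)
    then have "(r, q, 0) \<in> SC2 m1 m2 n1 n2"
      using that assms unfolding SC2_def by auto
    then show ?thesis by (simp add: q_def r_def)
  qed
  moreover have "?shift ` SC2 m1 (m2 - 1) n1 (n2 - 1) \<subseteq> SC2 m1 m2 n1 n2"
    using assms by (auto simp: SC2_def)
  ultimately show "x \<in> SC2 m1 m2 n1 n2"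
    if "x \<in> ?shift ` SC2 m1 (m2 - 1) n1 (n2 - 1) \<union> ?digits ` {0..?K}" for x
    using that by blast
qed

lemma card_SC2_recursion_varpi2:
  assumes "0 \<le> m1" "0 < m2" "0 \<le> n1" "0 < n2"
  shows "int (card (SC2 m1 m2 n1 n2)) = int (card (SC2 m1 (m2 - 1) n1 (n2 - 1)))
           + min (min (2*(m1 + m2)) (2*(n1 + n2))) (m1 + n1) + 1"
proof -
  let ?shift = "\<lambda>(b :: int, c :: int, d :: int). if c = 0 then (b, 0, d + 1) else (b + 2, c - 1, 0)"
  let ?digits = "\<lambda>k :: int. (k mod 2, k div 2, 0 :: int)"
  let ?K = "min (min (2*(m1 + m2)) (2*(n1 + n2))) (m1 + n1)"
  have "inj_on ?shift (SC2 m1 (m2 - 1) n1 (n2 - 1))"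
    by (auto simp: inj_on_def SC2_def split: if_splits)
  moreover have "inj_on ?digits X" for X
    by (rule inj_onI) (metis Pair_inject div_mod_decomp_int)
  moreover have "?shift ` SC2 m1 (m2 - 1) n1 (n2 - 1) \<inter> ?digits ` {0..?K} = {}"
  proof -
    have "?digits k \<noteq> ?shift y" if "y \<in> SC2 m1 (m2 - 1) n1 (n2 - 1)" for k y
      using that pos_mod_sign[of 2 k]
      by (auto simp: SC2_def split: prod.splits if_splits)
    then show ?thesis by (metis (no_types, lifting) disjoint_iff imageE)
  qed
  moreover have "?K \<ge> 0"
    using assms by simp
  ultimately show ?thesis
    unfolding SC2_decomposition_varpi2[OF assms]
    by (simp add: card_Un_disjoint card_image finite_SC2)
qed

lemma SC2_decomposition_varpi1:
  assumes "0 \<le> m1" "0 \<le> m2" "0 \<le> n1" "0 \<le> n2" "min m2 n2 = 0"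
  shows "SC2 m1 m2 n1 n2 =
           (\<lambda>(b, c, d). (b, c + 1, d)) ` SC2 (m1 - 1) m2 (n1 - 1) n2 \<union>
           (\<lambda>b. (b, 0, 0)) ` {0..min n1 m2 + min m1 n2}"
    (is "_ = ?shift ` _ \<union> ?axis ` {0..?K}")
proof (intro equalityI subsetI)
  fix x assume x: "x \<in> SC2 m1 m2 n1 n2"
  then obtain b c where [simp]: "x = (b, c, 0)"
    using assms(5) by (auto simp: SC2_def)
  consider "c \<ge> 1" | "c = 0"
    using x by (force simp: SC2_def)
  then show "x \<in> ?shift ` SC2 (m1 - 1) m2 (n1 - 1) n2 \<union> ?axis ` {0..?K}"
  proof cases
    case 1
    then have "(b, c - 1, 0) \<in> SC2 (m1 - 1) m2 (n1 - 1) n2"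
      using x assms by (auto simp: SC2_def)
    then show ?thesis by (force intro: image_eqI[where x = "(b, c - 1, 0)"])
  next
    case 2
    then have "b \<in> {0..?K}"
      using x assms by (auto simp: SC2_def)
    then show ?thesis using 2 by force
  qed
next
  fix x assume "x \<in> ?shift ` SC2 (m1 - 1) m2 (n1 - 1) n2 \<union> ?axis ` {0..?K}"
  then show "x \<in> SC2 m1 m2 n1 n2"
    using assms by (auto simp: SC2_def)
qed

lemma card_SC2_recursion_varpi1:
  assumes "0 \<le> m1" "0 \<le> m2" "0 \<le> n1" "0 \<le> n2" "min m2 n2 = 0"
  shows "int (card (SC2 m1 m2 n1 n2)) = int (card (SC2 (m1 - 1) m2 (n1 - 1) n2))
           + min n1 m2 + min m1 n2 + 1"
proof -
  have "inj_on (\<lambda>(b :: int, c :: int, d :: int). (b, c + 1, d)) X" "inj_on (\<lambda>b :: int. (b, 0 :: int, 0 :: int)) Y"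
    for X Y by (auto simp: inj_on_def)
  moreover have "(\<lambda>(b, c, d). (b, c + 1, d)) ` SC2 (m1 - 1) m2 (n1 - 1) n2 \<inter>
                   (\<lambda>b. (b, 0, 0)) ` {0..min n1 m2 + min m1 n2} = {}"
    by (auto simp: SC2_def)
  moreover have "min n1 m2 + min m1 n2 \<ge> 0"
    using assms by simp
  ultimately show ?thesis
    unfolding SC2_decomposition_varpi1[OF assms]
    by (simp add: card_Un_disjoint card_image finite_SC2)
qed

theorem lemma5p3:
  fixes m1 m2 n1 n2 :: int
  assumes "0 \<le> m1" "0 \<le> m2" "0 \<le> n1" "0 \<le> n2"
  shows "int (card (SC m1 m2 n1 n2)) =
           int (card (SC (m1 - 1) m2 (n1 - 1) n2)) + int (card (SC1 m1 (m2 - 1) n1 (n2 - 1)))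
           + int (card (SC2 m1 m2 n1 n2))
       \<and> (min m2 n2 > 0 \<longrightarrow>
           int (card (SC2 m1 m2 n1 n2)) = int (card (SC2 m1 (m2 - 1) n1 (n2 - 1)))
             + min (min (2*(m1 + m2)) (2*(n1 + n2))) (m1 + n1) + 1)
       \<and> (min m2 n2 = 0 \<longrightarrow> min m1 n1 > 0 \<longrightarrow>
           int (card (SC2 m1 m2 n1 n2)) = int (card (SC2 (m1 - 1) m2 (n1 - 1) n2))
             + min n1 m2 + min m1 n2 + 1)"
  using card_SC_recursion[OF assms] card_SC2_recursion_varpi2 card_SC2_recursion_varpi1[OF assms]
    assms by simp

end
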